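(* Let $n\in\mathbb{N}$, $H\in\mathbb{R}^{n\times n}$, $W\succ 0$ in $\mathbb{R}^{n\times n}$, and $C=\mathrm{diag}(C_{11},\dots,C_{nn})$ diagonal with all $C_{ii}\ne 0$; assume $(H,C)$ observable and $(H,D)$ controllable where $W=DD^T$. Let $\Delta>0$ (the $\ell_2$-sensitivity $\Delta_{\ell_2}y$), let $\delta\in[10^{-5},10^{-1}]$, let $\epsilon>0$, and set $$\sigma=\frac{\Delta}{2\epsilon}\Big(K_\delta+\sqrt{K_\delta^2+2\epsilon}\Big),\qquad K_\delta:=\mathcal Q^{-1}(\delta),$$ and $V=\sigma^2 I_n$. Let $\Sigma$ be the unique positive semidefinite solution of $\Sigma = H\Sigma H^T - H\Sigma C^T(C\Sigma C^T+V)^{-1}C\Sigma H^T + W$ and $\overline\Sigma:=(C^TV^{-1}C+\Sigma^{-1})^{-1}$. Let $B_l,B_u$ satisfy $0<B_l<n\,\lambda_n(W)$ and $B_u>0$, and define $$\eta_2:=\left(\frac{B_l\,C_u^2}{\Delta^2\big(n-B_l\lambda_n(W)^{-1}\big)}\right)^{1/2},\qquad \eta_4:=\left(\frac{B_u\,C_l^2}{n\,\Delta^2}\right)^{1/2}.$$ If $$\frac18\left(\frac{1+\sqrt{36\eta_4+1}}{\eta_4}\right)^2\le\epsilon,$$ then $\mathrm{tr}\,\overline\Sigma\le B_u$; and if $\epsilon\le 1/\eta_2$, then $\mathrm{tr}\,\overline\Sigma\ge B_l$. In particular, if both inequalities on $\epsilon$ hold, then $B_l\le\mathrm{tr}\,\overline\Sigma\le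 B_u$.
   Context: $\mathcal Q(y)=\frac{1}{\sqrt{2\pi}}\int_y^\infty e^{-z^2/2}\,dz$ is the Gaussian tail function and $\mathcal Q^{-1}$ its inverse. The noise level $\sigma$ is the Gaussian-mechanism noise giving $(\epsilon,\delta)$-differential privacy of the state trajectory when $\Delta$ is the sensitivity $\Delta_{\ell_2}y=\sup\{\|Cx-Cx'\|_{\ell_2}:\|x-x'\|_{\ell_2}\le B\}$; for the claim, $\Delta$ may be any positive constant. $\mathrm{tr}\,\overline\Sigma$ is the steady-state mean squared a posteriori (estimation) error of the Kalman filter. $\lambda_n(W)$ is the smallest eigenvalue of $W$. $C_l:=C_{ll}$ with $l=\arg\min_i C_{ii}^2$ and $C_u:=C_{uu}$ with $u=\arg\max_i C_{ii}^2$. *)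

theory Defs
  imports "HOL-Analysis.Analysis"
begin

definition Qfun :: "real \<Rightarrow> real" where
  "Qfun y = (1 / sqrt (2 * pi)) * integral {y..} (\<lambda>z. exp (- (z^2) / 2))"

definition Qinv :: "real \<Rightarrow> real" where
  "Qinv d = (THE y. Qfun y = d)"

fun matpow :: "real^'n^'n \<Rightarrow> nat \<Rightarrow> real^'n^'n" where
  "matpow H 0 = mat 1"
| "matpow H (Suc k) = H ** matpow H k"

definition psd :: "real^'n^'n \<Rightarrow> bool" where
  "psd M \<longleftrightarrow> transpose M = M \<and> (\<forall>x. 0 \<le> x \<bullet> (M *v x))"

definition pd :: "real^'n^'n \<Rightarrow> bool" where
  "pd M \<longleftrightarrow> transpose M = M \<and> (\<forall>x. x \<noteq> 0 \<longrightarrow> 0 < x \<bullet> (M *v x))"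

definition lambda_min :: "real^'n^'n \<Rightarrow> real" where
  "lambda_min W = Min {l. \<exists>v. v \<noteq> 0 \<and> W *v v = l *\<^sub>R v}"

text \<open>Observability of (H,C): the observability matrix
  [C; C H; ...; C H^(n-1)] (n = CARD('n)) has full column rank n,
  i.e. its kernel is trivial.\<close>
definition observable :: "real^'n^'n \<Rightarrow> real^'n^'p \<Rightarrow> bool" where
  "observable H C \<longleftrightarrow>
     (\<forall>x. (\<forall>k<CARD('n). (C ** matpow H k) *v x = 0) \<longrightarrow> x = 0)"

text \<open>Controllability of (H,D): the controllability matrix
  [D, H D, ..., H^(n-1) D] has full row rank n, i.e. its columns span R^n.\<close>
definition controllable :: "real^'n^'n \<Rightarrow> real^'m^'n \<Rightarrow> bool" where
  "controllable H D \<longleftrightarrow>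
     span (\<Union>k\<in>{..<CARD('n)}. range (\<lambda>u. (matpow H k ** D) *v u)) = UNIV"

definition diagonal_mat :: "real^'n^'n \<Rightarrow> bool" where
  "diagonal_mat C \<longleftrightarrow> (\<forall>i j. i \<noteq> j \<longrightarrow> C $ i $ j = 0)"

end

theory Submission
  imports Defs
begin

(* Let lambda = lambda_min W and s = sigma^2. The term subtracted in the Riccati recursion is
   bounded by the term it is subtracted from, so the fixpoint dominates the process noise:
   Sigma >= W >= lambda I, hence Sigma^-1 <= I / lambda. The inverse posterior covariance
   M = C^T C / s + Sigma^-1 therefore lies between C^T C / s and C^T C / s + I / lambda.
   The lower bound gives (M^-1)_ii <= s / C_ii^2, and the upper one, via 1 / M_ii <= (M^-1)_ii
   for positive definite M, gives 1 / (C_ii^2 / s + 1 / lambda) <= (M^-1)_ii.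
   Summing over i bounds the trace in terms of s, and the two conditions on epsilon amount to
   sigma <= eta4 Delta resp. sigma >= eta2 Delta, because 1 <= Q^-1(delta) <= 9/2 on
   [10^-5, 10^-1]. *)

section \<open>Quadratic forms and matrix inverses\<close>

lemma inner_matrix_vector_transpose:
  "(x::real^'n) \<bullet> (A *v y) = (transpose A *v x) \<bullet> (y::real^'m)"
  by (simp add: dot_lmul_matrix)

lemma inner_vector_matrix: "(x::real^'n) \<bullet> (y v* A) = (A *v x) \<bullet> (y::real^'m)"
  by (metis dot_lmul_matrix inner_commute)

lemma symmetric_inner_matrix_commute:
  "transpose A = A \<Longrightarrow> (x::real^'n) \<bullet> (A *v y) = y \<bullet> (A *v x)"
  by (metis inner_matrix_vector_transpose inner_commute)

lemma transpose_add: "transpose (A + B) = transpose A + transpose (B::real^'n^'m)"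
  by (simp add: transpose_def vec_eq_iff)

lemma scaleR_mat_1_mult_vector: "((c::real) *\<^sub>R mat 1) *v (x::real^'n) = c *\<^sub>R x"
  by (simp add: vec_eq_iff matrix_vector_mult_def mat_def if_distrib if_distribR cong: if_cong)

lemma axis_inner_matrix_axis: "axis i 1 \<bullet> ((M::real^'n^'n) *v axis i 1) = M $ i $ i"
  by (simp add: inner_axis' matrix_vector_mul_component inner_axis)

lemma psd_cauchy_schwarz:
  fixes A :: "real^'n^'n"
  assumes "psd A"
  shows "(x \<bullet> (A *v y))^2 \<le> (x \<bullet> (A *v x)) * (y \<bullet> (A *v y))"
proof -
  have sym: "transpose A = A" and nonneg: "\<And>x. 0 \<le> x \<bullet> (A *v x)"
    using assms unfolding psd_def by auto
  define a b c where "a = x \<bullet> (A *v x)" and "b = x \<bullet> (A *v y)" and "c = y \<bullet> (A *v y)"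
  have quadratic: "0 \<le> a + 2*t*b + t^2*c" for t
  proof -
    have "0 \<le> (x + t *\<^sub>R y) \<bullet> (A *v (x + t *\<^sub>R y))" by (rule nonneg)
    also have "\<dots> = a + t * (x \<bullet> (A *v y)) + t * (y \<bullet> (A *v x)) + t^2 * c"
      by (simp add: a_def c_def algebra_simps inner_add_left inner_add_right power2_eq_square)
    finally show ?thesis
      using symmetric_inner_matrix_commute[OF sym, of y x] by (simp add: b_def)
  qed
  have "0 \<le> c" using nonneg c_def by blast
  show ?thesis
  proof (cases "c = 0")
    case True
    have "b = 0"
    proof (rule ccontr)
      assume "b \<noteq> 0"
      with True quadratic[of "-(a+1)/(2*b)"] show False by (simp add: field_simps)
    qed
    with True show ?thesis by (simp flip: b_def c_def)
  next
    case False
    with \<open>0 \<le> c\<close> have "c > 0" by simp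
    have "0 \<le> a + 2*(-b/c)*b + (-b/c)^2*c" by (rule quadratic)
    hence "0 \<le> (a*c - b^2)/c" using \<open>c > 0\<close> by (simp add: field_simps power2_eq_square)
    hence "b^2 \<le> a*c" using \<open>c > 0\<close> by (simp add: zero_le_divide_iff)
    thus ?thesis by (simp add: a_def b_def c_def)
  qed
qed

lemma psd_kernel_of_quadratic_form_eq_0:
  fixes A :: "real^'n^'n"
  assumes "psd A" and "v \<bullet> (A *v v) = 0"
  shows "A *v v = 0"
proof -
  have "((A *v v) \<bullet> (A *v v))^2 \<le> 0"
    using psd_cauchy_schwarz[OF assms(1), of "A *v v" v] assms(2) by simp
  thus ?thesis by simp
qed

lemma pdI:
  fixes M :: "real^'n^'n"
  assumes "transpose M = M" and "m > 0" and "\<And>x. m * (x \<bullet> x) \<le> x \<bullet> (M *v x)"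
  shows "pd M"
  unfolding pd_def
proof (intro conjI allI impI)
  fix x :: "real^'n" assume "x \<noteq> 0"
  hence "0 < m * (x \<bullet> x)" using assms(2) by simp
  also have "\<dots> \<le> x \<bullet> (M *v x)" by (rule assms(3))
  finally show "0 < x \<bullet> (M *v x)" .
qed (use assms(1) in auto)

lemma pd_imp_psd: "pd M \<Longrightarrow> psd M"
  unfolding pd_def psd_def by (metis inner_zero_left order.strict_implies_order order_refl)

lemma pd_diag_pos:
  fixes M :: "real^'n^'n"
  assumes "pd M"
  shows "0 < M $ i $ i"
  using assms axis_inner_matrix_axis[of i M] unfolding pd_def by (metis axis_eq_0_iff zero_neq_one)

lemma pd_invertible:
  fixes M :: "real^'n^'n"
  assumes "pd M"
  shows "invertible M"
proof -
  have "\<forall>x. M *v x = 0 \<longrightarrow> x = 0"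
    using assms unfolding pd_def by (metis inner_zero_right less_irrefl)
  thus ?thesis using matrix_left_invertible_ker invertible_left_inverse by blast
qed

lemma invertible_matrix_inv:
  fixes A :: "real^'n^'n"
  assumes "invertible A"
  shows "A ** matrix_inv A = mat 1" and "matrix_inv A ** A = mat 1"
proof -
  obtain B where "A ** B = mat 1 \<and> B ** A = mat 1" using assms unfolding invertible_def by blast
  hence "A ** matrix_inv A = mat 1 \<and> matrix_inv A ** A = mat 1"
    unfolding matrix_inv_def by (rule someI)
  thus "A ** matrix_inv A = mat 1" and "matrix_inv A ** A = mat 1" by auto
qed

lemma matrix_inv_unique:
  fixes A :: "real^'n^'n"
  assumes "A ** B = mat 1" and "B ** A = mat 1"
  shows "matrix_inv A = B"
proof -
  have "invertible A" using assms unfolding invertible_def by blast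
  hence "matrix_inv A ** (A ** B) = B"
    by (metis invertible_matrix_inv(2) matrix_mul_assoc matrix_mul_lid)
  thus ?thesis using assms by simp
qed

lemma matrix_inv_scaleR_mat_1:
  "c \<noteq> 0 \<Longrightarrow> matrix_inv (c *\<^sub>R mat 1 :: real^'n^'n) = (1/c) *\<^sub>R mat 1"
  by (rule matrix_inv_unique) (simp_all add: matrix_eq matrix_vector_mul_assoc[symmetric] scaleR_mat_1_mult_vector)

lemma transpose_matrix_inv_symmetric:
  fixes A :: "real^'n^'n"
  assumes "transpose A = A" and "invertible A"
  shows "transpose (matrix_inv A) = matrix_inv A"
proof -
  have "A ** transpose (matrix_inv A) = mat 1" "transpose (matrix_inv A) ** A = mat 1"
    using arg_cong[OF invertible_matrix_inv(2)[OF assms(2)], of transpose]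
          arg_cong[OF invertible_matrix_inv(1)[OF assms(2)], of transpose]
    by (simp_all add: matrix_transpose_mul assms(1))
  thus ?thesis by (metis matrix_inv_unique)
qed

lemma pd_matrix_inv:
  fixes S :: "real^'n^'n"
  assumes "pd S"
  shows "pd (matrix_inv S)"
  unfolding pd_def
proof (intro conjI allI impI)
  have sym: "transpose S = S" using assms unfolding pd_def by simp
  show "transpose (matrix_inv S) = matrix_inv S"
    by (rule transpose_matrix_inv_symmetric[OF sym pd_invertible[OF assms]])
  fix x :: "real^'n" assume "x \<noteq> 0"
  define y where "y = matrix_inv S *v x"
  have "S *v y = x"
    unfolding y_def by (simp add: matrix_vector_mul_assoc invertible_matrix_inv(1)[OF pd_invertible[OF assms]])
  hence "y \<noteq> 0" using \<open>x \<noteq> 0\<close> by auto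
  hence "0 < y \<bullet> (S *v y)" using assms unfolding pd_def by blast
  thus "0 < x \<bullet> (matrix_inv S *v x)" using \<open>S *v y = x\<close> by (simp add: y_def inner_commute)
qed

lemma matrix_inv_quadratic_form_le:
  fixes S :: "real^'n^'n"
  assumes "invertible S" and "m > 0" and lower: "\<And>y. m * (y \<bullet> y) \<le> y \<bullet> (S *v y)"
  shows "x \<bullet> (matrix_inv S *v x) \<le> (x \<bullet> x) / m"
proof -
  define y where "y = matrix_inv S *v x"
  have "S *v y = x"
    unfolding y_def by (simp add: matrix_vector_mul_assoc invertible_matrix_inv(1)[OF assms(1)])
  hence xy: "x \<bullet> y = y \<bullet> (S *v y)" by (simp add: inner_commute)
  have "m * (norm y)^2 \<le> norm x * norm y"
    using lower[of y] xy norm_cauchy_schwarz[of x y] by (simp add: power2_norm_eq_inner)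
  hence "m * norm y \<le> norm x"
    by (cases "norm y = 0") (simp_all add: power2_eq_square)
  hence "norm x * norm y \<le> norm x * (norm x / m)"
    using \<open>m > 0\<close> by (intro mult_left_mono) (simp_all add: field_simps)
  with norm_cauchy_schwarz[of x y] have "x \<bullet> y \<le> norm x * (norm x / m)" by linarith
  thus ?thesis by (simp add: y_def power2_norm_eq_inner[symmetric] power2_eq_square)
qed

section \<open>The smallest eigenvalue\<close>

lemma symmetric_eigenvectors_orthogonal:
  fixes W :: "real^'n^'n"
  assumes "transpose W = W" "W *v v = l *\<^sub>R v" "W *v w = k *\<^sub>R w" "l \<noteq> k"
  shows "v \<bullet> w = 0"
proof -
  have "k * (v \<bullet> w) = l * (v \<bullet> w)"
    using symmetric_inner_matrix_commute[OF assms(1), of v w] assms(2,3) by (simp add: inner_commute)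
  thus ?thesis using assms(4) by simp
qed

lemma symmetric_eigenvalues_finite:
  fixes W :: "real^'n^'n"
  assumes "transpose W = W"
  shows "finite {l. \<exists>v. v \<noteq> 0 \<and> W *v v = l *\<^sub>R v}" (is "finite ?E")
proof -
  define f where "f l = (SOME v. v \<noteq> 0 \<and> W *v v = l *\<^sub>R v)" for l
  have f: "f l \<noteq> 0 \<and> W *v f l = l *\<^sub>R f l" if "l \<in> ?E" for l
  proof -
    have "\<exists>v. v \<noteq> 0 \<and> W *v v = l *\<^sub>R v" using that by blast
    thus ?thesis unfolding f_def by (rule someI_ex)
  qed
  have "inj_on f ?E"
  proof (rule inj_onI)
    fix l k assume lk: "l \<in> ?E" "k \<in> ?E" "f l = f k"
    have eig_l: "W *v f l = l *\<^sub>R f l" and "f l \<noteq> 0" using f[OF lk(1)] by simp_all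
    have "W *v f l = k *\<^sub>R f l" using f[OF lk(2)] lk(3) by simp
    with eig_l have "l *\<^sub>R f l = k *\<^sub>R f l" by (metis trans sym)
    thus "l = k" using \<open>f l \<noteq> 0\<close> by simp
  qed
  moreover have "independent (f ` ?E)"
  proof (rule pairwise_orthogonal_independent)
    show "pairwise orthogonal (f ` ?E)"
    proof (rule pairwiseI)
      fix x y assume "x \<in> f ` ?E" "y \<in> f ` ?E" "x \<noteq> y"
      then obtain l k where "l \<in> ?E" "k \<in> ?E" "x = f l" "y = f k" "l \<noteq> k" by blast
      thus "orthogonal x y"
        using symmetric_eigenvectors_orthogonal[OF assms] f unfolding orthogonal_def by blast
    qed
    show "0 \<notin> f ` ?E" using f by fastforce
  qed
  ultimately show ?thesis using finiteI_independent finite_imageD by blast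
qed

text \<open>The minimum of the Rayleigh quotient over the unit sphere is attained at an eigenvector,
  so it is the smallest eigenvalue.\<close>

lemma pd_lambda_min:
  fixes W :: "real^'n^'n"
  assumes "pd W"
  shows "0 < lambda_min W" and "lambda_min W * (x \<bullet> x) \<le> x \<bullet> (W *v x)"
proof -
  have sym: "transpose W = W" and pos: "\<And>x. x \<noteq> 0 \<Longrightarrow> 0 < x \<bullet> (W *v x)"
    using assms unfolding pd_def by auto
  define q where "q x = x \<bullet> (W *v x)" for x :: "real^'n"
  have "continuous_on (sphere 0 1) q"
    unfolding q_def by (intro continuous_on_inner continuous_on_id linear_continuous_on matrix_vector_mul_bounded_linear)
  moreover have "(axis undefined 1 :: real^'n) \<in> sphere 0 1" by (simp add: norm_axis_1)
  hence "sphere (0::real^'n) 1 \<noteq> {}" by auto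
  ultimately obtain v where "v \<in> sphere 0 1" and vmin: "\<forall>y\<in>sphere 0 1. q v \<le> q y"
    using continuous_attains_inf[OF compact_sphere] by metis
  hence nv: "norm v = 1" by simp
  define m where "m = q v"
  have q_scaleR: "q (c *\<^sub>R x) = c^2 * q x" for c x
    by (simp add: q_def algebra_simps power2_eq_square)
  have bound: "m * (x \<bullet> x) \<le> q x" for x
  proof (cases "x = 0")
    case False
    have "m \<le> q ((1/norm x) *\<^sub>R x)" using vmin m_def False by simp
    also have "\<dots> = q x / (norm x)^2" unfolding q_scaleR by (simp add: power_divide)
    finally show ?thesis using False by (simp add: field_simps power2_norm_eq_inner)
  qed (simp add: q_def)
  define A where "A = W - m *\<^sub>R mat 1"
  have "transpose A = A" using sym by (simp add: A_def transpose_def vec_eq_iff mat_def)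
  moreover have "0 \<le> x \<bullet> (A *v x)" for x
    using bound[of x] by (simp add: A_def q_def matrix_vector_mult_diff_rdistrib
        scaleR_mat_1_mult_vector inner_diff_right)
  ultimately have "psd A" unfolding psd_def by blast
  moreover have "v \<bullet> (A *v v) = 0"
    using nv by (simp add: A_def q_def m_def matrix_vector_mult_diff_rdistrib inner_diff_right
        scaleR_mat_1_mult_vector power2_norm_eq_inner[symmetric])
  ultimately have "A *v v = 0" by (rule psd_kernel_of_quadratic_form_eq_0)
  hence eig: "W *v v = m *\<^sub>R v"
    by (simp add: A_def matrix_vector_mult_diff_rdistrib scaleR_mat_1_mult_vector)
  have "v \<noteq> 0" using nv by auto
  have "lambda_min W = m"
    unfolding lambda_min_def
  proof (rule Min_eqI[OF symmetric_eigenvalues_finite[OF sym]])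
    show "m \<in> {l. \<exists>v. v \<noteq> 0 \<and> W *v v = l *\<^sub>R v}" using eig \<open>v \<noteq> 0\<close> by blast
    fix l assume "l \<in> {l. \<exists>v. v \<noteq> 0 \<and> W *v v = l *\<^sub>R v}"
    then obtain u where "u \<noteq> 0" "W *v u = l *\<^sub>R u" by blast
    hence "m * (u \<bullet> u) \<le> l * (u \<bullet> u)" using bound[of u] by (simp add: q_def)
    moreover have "0 < u \<bullet> u" using \<open>u \<noteq> 0\<close> by simp
    ultimately show "m \<le> l" by (simp only: mult_le_cancel_right_pos)
  qed
  moreover have "0 < m" using pos[OF \<open>v \<noteq> 0\<close>] by (simp add: m_def q_def)
  moreover have "m * (x \<bullet> x) \<le> x \<bullet> (W *v x)" using bound[of x] by (simp add: q_def)
  ultimately show "0 < lambda_min W" "lambda_min W * (x \<bullet> x) \<le> x \<bullet> (W *v x)"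
    by simp_all
qed

section \<open>The Riccati fixpoint and the posterior covariance\<close>

text \<open>With w = H^T x, u = G^-1 C S w and z = C^T u, the subtracted term is
  w . S z = z . S z + u . V u, and (w - z) . S (w - z) \<ge> 0 bounds it by w . S w.\<close>

lemma riccati_fixpoint_ge_process_noise:
  fixes H W S :: "real^'n^'n" and C :: "real^'n^'p" and V :: "real^'p^'p"
  assumes "psd S" and "pd V"
    and riccati: "S = H ** S ** transpose H
        - H ** S ** transpose C ** matrix_inv (C ** S ** transpose C + V)
            ** C ** S ** transpose H + W"
  shows "x \<bullet> (W *v x) \<le> x \<bullet> (S *v x)"
proof -
  have S_sym: "transpose S = S" and S_nonneg: "\<And>x. 0 \<le> x \<bullet> (S *v x)"
    using assms(1) unfolding psd_def by auto
  have V_pos: "\<And>x. x \<noteq> 0 \<Longrightarrow> 0 < x \<bullet> (V *v x)"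
    using assms(2) unfolding pd_def by auto
  define G where "G = C ** S ** transpose C + V"
  have G_form: "y \<bullet> (G *v y) = (transpose C *v y) \<bullet> (S *v (transpose C *v y)) + y \<bullet> (V *v y)" for y
    by (simp add: G_def matrix_vector_mult_add_rdistrib matrix_vector_mul_assoc[symmetric]
        inner_add_right inner_matrix_vector_transpose[of y C])
  have "pd G"
    unfolding pd_def
  proof (intro conjI allI impI)
    show "transpose G = G"
      using assms(2) unfolding G_def pd_def
      by (simp add: transpose_add matrix_transpose_mul S_sym matrix_mul_assoc)
    fix y :: "real^'p" assume "y \<noteq> 0"
    with V_pos S_nonneg show "0 < y \<bullet> (G *v y)" unfolding G_form by (simp add: add_nonneg_pos)
  qed
  define w where "w = transpose H *v x"
  define u where "u = matrix_inv G *v (C *v (S *v w))"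
  define z where "z = transpose C *v u"
  have Gu: "G *v u = C *v (S *v w)"
    unfolding u_def matrix_vector_mul_assoc[of G]
    by (simp add: invertible_matrix_inv(1)[OF pd_invertible[OF \<open>pd G\<close>]])
  have "S *v x = H *v (S *v w) - H *v (S *v z) + W *v x"
    using arg_cong[where f="\<lambda>M. M *v x", OF riccati]
    by (simp only: G_def[symmetric] matrix_vector_mult_add_rdistrib matrix_vector_mult_diff_rdistrib
        matrix_vector_mul_assoc[symmetric] w_def u_def z_def)
  hence "x \<bullet> (S *v x) = w \<bullet> (S *v w) - w \<bullet> (S *v z) + x \<bullet> (W *v x)"
    by (simp add: inner_add_right inner_diff_right inner_matrix_vector_transpose[of x H] w_def)
  moreover have "w \<bullet> (S *v z) = z \<bullet> (S *v z) + u \<bullet> (V *v u)"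
  proof -
    have "w \<bullet> (S *v z) = (C *v (S *v w)) \<bullet> u"
      using inner_matrix_vector_transpose[of w S z] inner_matrix_vector_transpose[of "S *v w" "transpose C" u]
      by (simp add: S_sym z_def)
    also have "\<dots> = u \<bullet> (G *v u)" by (simp add: Gu inner_commute)
    finally show ?thesis by (simp add: G_form z_def)
  qed
  moreover have "0 \<le> (w - z) \<bullet> (S *v (w - z))" by (rule S_nonneg)
  moreover have "(w - z) \<bullet> (S *v (w - z)) = w \<bullet> (S *v w) - 2 * (w \<bullet> (S *v z)) + z \<bullet> (S *v z)"
    using symmetric_inner_matrix_commute[OF S_sym, of z w]
    by (simp add: inner_diff_left inner_diff_right matrix_vector_mult_diff_distrib)
  moreover have "0 \<le> u \<bullet> (V *v u)" using V_pos[of u] by (cases "u = 0") auto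
  ultimately show ?thesis by linarith
qed

lemma matrix_inv_diag_le:
  fixes M :: "real^'n^'n"
  assumes "invertible M" and "a > 0" and lower: "\<And>x. a * (x $ i)^2 \<le> x \<bullet> (M *v x)"
  shows "matrix_inv M $ i $ i \<le> 1 / a"
proof -
  define z where "z = matrix_inv M *v axis i 1"
  have "M *v z = axis i 1"
    unfolding z_def by (simp add: matrix_vector_mul_assoc invertible_matrix_inv(1)[OF assms(1)])
  hence quadratic: "a * (z $ i)^2 \<le> z $ i" using lower[of z] by (simp add: inner_axis)
  have "z $ i \<le> 1 / a"
  proof (cases "z $ i \<le> 0")
    case True
    with \<open>a > 0\<close> show ?thesis by (meson divide_pos_pos order_trans less_imp_le zero_less_one)
  next
    case False
    with quadratic have "a * z $ i \<le> 1" by (simp add: power2_eq_square mult_le_cancel_right_pos)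
    with \<open>a > 0\<close> show ?thesis by (simp add: field_simps)
  qed
  thus ?thesis by (simp add: z_def matrix_vector_mul_component inner_axis)
qed

lemma pd_matrix_inv_diag_ge:
  fixes M :: "real^'n^'n"
  assumes "pd M"
  shows "1 / M $ i $ i \<le> matrix_inv M $ i $ i"
proof -
  define e where "e = (axis i 1 :: real^'n)"
  define z where "z = matrix_inv M *v e"
  have Mz: "M *v z = e"
    unfolding z_def by (simp add: matrix_vector_mul_assoc invertible_matrix_inv(1)[OF pd_invertible[OF assms]])
  have "z \<bullet> (M *v z) = z $ i" unfolding Mz e_def by (simp add: inner_axis)
  also have "\<dots> = matrix_inv M $ i $ i"
    by (simp add: z_def e_def matrix_vector_mul_component inner_axis)
  finally have z_i: "z \<bullet> (M *v z) = matrix_inv M $ i $ i" .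
  have "(e \<bullet> (M *v z))^2 \<le> (e \<bullet> (M *v e)) * (z \<bullet> (M *v z))"
    by (rule psd_cauchy_schwarz[OF pd_imp_psd[OF assms]])
  hence "1 \<le> M $ i $ i * matrix_inv M $ i $ i"
    using z_i axis_inner_matrix_axis[of i M] by (simp add: Mz e_def inner_axis)
  with pd_diag_pos[OF assms] show ?thesis by (simp add: divide_le_eq mult.commute)
qed

lemma diagonal_mat_mult_vector_nth:
  assumes "diagonal_mat C"
  shows "(C *v x) $ i = C $ i $ i * (x::real^'n) $ i"
proof -
  have "(\<Sum>j\<in>UNIV. C $ i $ j * x $ j) = (\<Sum>j\<in>UNIV. if j = i then C $ i $ i * x $ i else 0)"
    by (rule sum.cong) (use assms in \<open>auto simp: diagonal_mat_def\<close>)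
  thus ?thesis by (simp add: matrix_vector_mult_def)
qed

lemma information_matrix_quadratic_form:
  fixes C :: "real^'n^'p" and P :: "real^'n^'n"
  assumes "s \<noteq> 0"
  shows "x \<bullet> ((transpose C ** matrix_inv (s *\<^sub>R mat 1) ** C + P) *v x)
           = (C *v x) \<bullet> (C *v x) / s + x \<bullet> (P *v x)"
  using assms
  by (simp add: matrix_inv_scaleR_mat_1 matrix_vector_mult_add_rdistrib
      matrix_vector_mul_assoc[symmetric] scaleR_mat_1_mult_vector inner_add_right inner_vector_matrix)

lemma information_matrix_pd:
  fixes C :: "real^'n^'p" and P :: "real^'n^'n"
  assumes "s > 0" and "psd P" and C_inj: "\<forall>x. C *v x = 0 \<longrightarrow> x = 0"
  shows "pd (transpose C ** matrix_inv (s *\<^sub>R mat 1) ** C + P)"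
  unfolding pd_def
proof (intro conjI allI impI)
  show "transpose (transpose C ** matrix_inv (s *\<^sub>R mat 1) ** C + P)
      = transpose C ** matrix_inv (s *\<^sub>R mat 1) ** C + P"
    using \<open>psd P\<close> \<open>s > 0\<close> unfolding psd_def
    by (simp add: matrix_inv_scaleR_mat_1 transpose_add matrix_transpose_mul transpose_scalar matrix_mul_assoc)
  fix x :: "real^'n" assume "x \<noteq> 0"
  hence "C *v x \<noteq> 0" using C_inj by blast
  hence "0 < (C *v x) \<bullet> (C *v x) / s" using \<open>s > 0\<close> by simp
  moreover have "0 \<le> x \<bullet> (P *v x)" using \<open>psd P\<close> unfolding psd_def by blast
  ultimately show "0 < x \<bullet> ((transpose C ** matrix_inv (s *\<^sub>R mat 1) ** C + P) *v x)"
    using \<open>s > 0\<close> by (simp add: information_matrix_quadratic_form)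
qed

lemma information_matrix_inv_diag_bounds:
  fixes C P :: "real^'n^'n"
  assumes C_diag: "diagonal_mat C" and C_nz: "\<forall>i. C $ i $ i \<noteq> 0" and "s > 0"
    and "psd P" and "lam > 0" and P_upper: "\<And>x. x \<bullet> (P *v x) \<le> (x \<bullet> x) / lam"
  defines "M \<equiv> transpose C ** matrix_inv (s *\<^sub>R mat 1) ** C + P"
  shows "matrix_inv M $ i $ i \<le> s / (C $ i $ i)^2"
    and "1 / ((C $ i $ i)^2 / s + 1 / lam) \<le> matrix_inv M $ i $ i"
proof -
  have C_nth: "(C *v x) $ k = C $ k $ k * x $ k" for x k
    by (rule diagonal_mat_mult_vector_nth[OF C_diag])
  have M_form: "x \<bullet> (M *v x) = (C *v x) \<bullet> (C *v x) / s + x \<bullet> (P *v x)" for x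
    unfolding M_def using \<open>s > 0\<close> by (simp add: information_matrix_quadratic_form)
  have P_nonneg: "0 \<le> x \<bullet> (P *v x)" for x using \<open>psd P\<close> unfolding psd_def by blast
  have "C *v x = 0 \<Longrightarrow> x = 0" for x using C_nz by (simp add: vec_eq_iff C_nth)
  hence "pd M" unfolding M_def using information_matrix_pd[OF \<open>s > 0\<close> \<open>psd P\<close>] by blast
  have "(C $ i $ i)^2 / s * (x $ i)^2 \<le> x \<bullet> (M *v x)" for x
  proof -
    have "((C *v x) $ i)^2 \<le> (C *v x) \<bullet> (C *v x)"
      using power_mono[OF component_le_norm_cart[of "C *v x" i] abs_ge_zero, of 2]
      by (simp add: power2_norm_eq_inner)
    hence "(C $ i $ i)^2 / s * (x $ i)^2 \<le> (C *v x) \<bullet> (C *v x) / s"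
      using \<open>s > 0\<close> by (simp add: C_nth power_mult_distrib divide_right_mono)
    thus ?thesis using P_nonneg[of x] M_form[of x] by linarith
  qed
  with C_nz \<open>s > 0\<close> show "matrix_inv M $ i $ i \<le> s / (C $ i $ i)^2"
    using matrix_inv_diag_le[OF pd_invertible[OF \<open>pd M\<close>], of "(C $ i $ i)^2 / s" i] by simp
  have "C *v axis i 1 = C $ i $ i *\<^sub>R axis i 1" by (simp add: vec_eq_iff C_nth axis_def)
  hence "M $ i $ i = (C $ i $ i)^2 / s + axis i 1 \<bullet> (P *v axis i 1)"
    using M_form[of "axis i 1"] axis_inner_matrix_axis[of i M]
    by (simp add: inner_axis_axis power2_eq_square)
  also have "\<dots> \<le> (C $ i $ i)^2 / s + 1 / lam"
    using P_upper[of "axis i 1"] by (simp add: inner_axis)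
  finally have "1 / ((C $ i $ i)^2 / s + 1 / lam) \<le> 1 / M $ i $ i"
    using pd_diag_pos[OF \<open>pd M\<close>] by (simp add: frac_le)
  also have "\<dots> \<le> matrix_inv M $ i $ i" by (rule pd_matrix_inv_diag_ge[OF \<open>pd M\<close>])
  finally show "1 / ((C $ i $ i)^2 / s + 1 / lam) \<le> matrix_inv M $ i $ i" .
qed

lemma kalman_posterior_diag_bounds:
  fixes H W S C :: "real^'n^'n" and s :: real
  assumes "pd W" and "diagonal_mat C" and "\<forall>i. C $ i $ i \<noteq> 0" and "s > 0" and "psd S"
    and riccati: "S = H ** S ** transpose H
        - H ** S ** transpose C ** matrix_inv (C ** S ** transpose C + s *\<^sub>R mat 1)
            ** C ** S ** transpose H + W"
  defines "Sb \<equiv> matrix_inv (transpose C ** matrix_inv (s *\<^sub>R mat 1) ** C + matrix_inv S)"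
  shows "Sb $ i $ i \<le> s / (C $ i $ i)^2"
    and "1 / ((C $ i $ i)^2 / s + 1 / lambda_min W) \<le> Sb $ i $ i"
proof -
  have "pd (s *\<^sub>R mat 1 :: real^'n^'n)"
    using \<open>s > 0\<close> by (intro pdI[of _ s]) (simp_all add: transpose_scalar scaleR_mat_1_mult_vector)
  hence S_lower: "lambda_min W * (x \<bullet> x) \<le> x \<bullet> (S *v x)" for x
    using pd_lambda_min(2)[OF \<open>pd W\<close>, of x] riccati_fixpoint_ge_process_noise[OF \<open>psd S\<close> _ riccati, of x]
    by linarith
  have "pd S"
    using \<open>psd S\<close> pd_lambda_min(1)[OF \<open>pd W\<close>] S_lower unfolding psd_def by (blast intro: pdI)
  have "x \<bullet> (matrix_inv S *v x) \<le> (x \<bullet> x) / lambda_min W" for x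
    using matrix_inv_quadratic_form_le[OF pd_invertible[OF \<open>pd S\<close>] pd_lambda_min(1)[OF \<open>pd W\<close>] S_lower] .
  with pd_imp_psd[OF pd_matrix_inv[OF \<open>pd S\<close>]] pd_lambda_min(1)[OF \<open>pd W\<close>]
  show "Sb $ i $ i \<le> s / (C $ i $ i)^2"
    and "1 / ((C $ i $ i)^2 / s + 1 / lambda_min W) \<le> Sb $ i $ i"
    unfolding Sb_def using information_matrix_inv_diag_bounds[OF assms(2-4)] by blast+
qed

lemma kalman_posterior_trace_bounds:
  fixes H W S C :: "real^'n^'n" and s :: real
  assumes "pd W" and "diagonal_mat C" and C_nz: "\<forall>i. C $ i $ i \<noteq> 0"
    and "s > 0" and "psd S"
    and "S = H ** S ** transpose H
        - H ** S ** transpose C ** matrix_inv (C ** S ** transpose C + s *\<^sub>R mat 1)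
            ** C ** S ** transpose H + W"
  defines "Sb \<equiv> matrix_inv (transpose C ** matrix_inv (s *\<^sub>R mat 1) ** C + matrix_inv S)"
    and "c_min \<equiv> Min ((\<lambda>i. (C $ i $ i)^2) ` UNIV)"
    and "c_max \<equiv> Max ((\<lambda>i. (C $ i $ i)^2) ` UNIV)"
  shows "trace Sb \<le> real CARD('n) * (s / c_min)"
    and "real CARD('n) * (1 / (c_max / s + 1 / lambda_min W)) \<le> trace Sb"
proof -
  note diag_bounds = kalman_posterior_diag_bounds[OF assms(1-6), folded Sb_def]
  have c_min_le: "c_min \<le> (C $ i $ i)^2" and le_c_max: "(C $ i $ i)^2 \<le> c_max" for i
    unfolding c_min_def c_max_def by simp_all
  have "c_min \<in> (\<lambda>i. (C $ i $ i)^2) ` UNIV" unfolding c_min_def by (rule Min_in) simp_all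
  hence "c_min > 0" using C_nz by auto
  have "0 < lambda_min W" by (rule pd_lambda_min(1)[OF \<open>pd W\<close>])
  have "trace Sb \<le> (\<Sum>i::'n\<in>UNIV. s / c_min)"
    unfolding trace_def
  proof (rule sum_mono)
    fix i
    have "s / (C $ i $ i)^2 \<le> s / c_min"
      using c_min_le[of i] \<open>c_min > 0\<close> \<open>s > 0\<close> by (intro divide_left_mono mult_pos_pos) auto
    with diag_bounds(1)[of i] show "Sb $ i $ i \<le> s / c_min" by linarith
  qed
  thus "trace Sb \<le> real CARD('n) * (s / c_min)" by simp
  have "(\<Sum>i::'n\<in>UNIV. 1 / (c_max / s + 1 / lambda_min W)) \<le> trace Sb"
    unfolding trace_def
  proof (rule sum_mono)
    fix i
    have "1 / (c_max / s + 1 / lambda_min W) \<le> 1 / ((C $ i $ i)^2 / s + 1 / lambda_min W)"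
    proof (rule frac_le)
      show "0 < (C $ i $ i)^2 / s + 1 / lambda_min W"
        using \<open>s > 0\<close> \<open>0 < lambda_min W\<close> by (simp add: add_nonneg_pos)
      show "(C $ i $ i)^2 / s + 1 / lambda_min W \<le> c_max / s + 1 / lambda_min W"
        using le_c_max[of i] \<open>s > 0\<close> by (simp add: divide_right_mono)
    qed simp_all
    with diag_bounds(2)[of i] show "1 / (c_max / s + 1 / lambda_min W) \<le> Sb $ i $ i" by linarith
  qed
  thus "real CARD('n) * (1 / (c_max / s + 1 / lambda_min W)) \<le> trace Sb" by simp
qed

section \<open>The Gaussian tail function\<close>

definition gauss_kernel :: "real \<Rightarrow> real" where "gauss_kernel z = exp (- (z^2) / 2)"

lemma gauss_kernel_pos: "gauss_kernel z > 0" by (simp add: gauss_kernel_def)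

lemma continuous_on_gauss_kernel: "continuous_on S gauss_kernel"
  unfolding gauss_kernel_def by (intro continuous_intros) auto

lemma gauss_kernel_le_exp_linear: "gauss_kernel z \<le> exp (y^2/2) * exp (- y * z)"
proof -
  have "- (z^2) / 2 \<le> y^2/2 + (- y * z)"
    using zero_le_power2[of "z - y"] by (simp add: power2_diff field_simps)
  hence "gauss_kernel z \<le> exp (y^2/2 + (- y * z))" unfolding gauss_kernel_def by (rule exp_mono)
  also have "\<dots> = exp (y^2/2) * exp (- y * z)" by (rule exp_add)
  finally show ?thesis .
qed

lemma gauss_kernel_integrable_on: "gauss_kernel integrable_on {a..}"
proof (rule measurable_bounded_by_integrable_imp_integrable_real)
  show "gauss_kernel \<in> borel_measurable (lebesgue_on {a..})"
    by (rule continuous_imp_measurable_on_sets_lebesgue[OF continuous_on_gauss_kernel]) (simp add: borel_closed)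
  show "(\<lambda>z. exp (1/2) * exp (- 1 * z)) integrable_on {a..}"
    using integrable_on_cmult_left[OF integrable_on_exp_minus_to_infinity[of 1 a], of "exp (1/2)"] by simp
  show "\<bar>gauss_kernel x\<bar> \<le> exp (1/2) * exp (- 1 * x)" for x
    using gauss_kernel_le_exp_linear[of x 1] gauss_kernel_pos[of x] by simp
  show "{a..} \<in> sets lebesgue" by (simp add: borel_closed)
qed

lemma integral_gauss_kernel_split:
  assumes "a \<le> b"
  shows "integral {a..} gauss_kernel = integral {a..b} gauss_kernel + integral {b..} gauss_kernel"
proof -
  have "(gauss_kernel has_integral (integral {a..b} gauss_kernel + integral {b..} gauss_kernel)) ({a..b} \<union> {b..})"
  proof (rule has_integral_Un)
    show "(gauss_kernel has_integral integral {a..b} gauss_kernel) {a..b}"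
      using integrable_continuous_interval[OF continuous_on_gauss_kernel] by (simp add: integrable_integral)
    show "(gauss_kernel has_integral integral {b..} gauss_kernel) {b..}" using gauss_kernel_integrable_on by (simp add: integrable_integral)
    have "{a..b} \<inter> {b..} = {b}" using assms by auto
    thus "negligible ({a..b} \<inter> {b..})" by simp
  qed
  moreover have "{a..b} \<union> {b..} = {a..}" using assms by auto
  ultimately show ?thesis by (simp add: integral_unique)
qed

lemma integral_gauss_kernel_pos:
  assumes "a < b"
  shows "integral {a..b} gauss_kernel > 0"
proof -
  define c where "c = exp (- (a^2 + b^2) / 2)"
  have "integral {a..b} (\<lambda>x. c) \<le> integral {a..b} gauss_kernel"
  proof (rule integral_le)
    show "(\<lambda>x. c) integrable_on {a..b}" by (rule integrable_const_ivl)
    show "gauss_kernel integrable_on {a..b}" using integrable_continuous_interval[OF continuous_on_gauss_kernel] .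
    fix x assume "x \<in> {a..b}"
    hence "x^2 \<le> a^2 + b^2"
    proof (cases "x \<ge> 0")
      case True
      hence "x^2 \<le> b^2" using \<open>x \<in> {a..b}\<close> by (intro power_mono) auto
      thus ?thesis using zero_le_power2[of a] by linarith
    next
      case False
      hence "(-x)^2 \<le> (-a)^2" using \<open>x \<in> {a..b}\<close> by (intro power_mono) auto
      hence "x^2 \<le> a^2" by simp
      thus ?thesis using zero_le_power2[of b] by linarith
    qed
    thus "c \<le> gauss_kernel x" unfolding c_def gauss_kernel_def by simp
  qed
  moreover have "integral {a..b} (\<lambda>x. c) > 0" using assms by (simp add: c_def)
  ultimately show ?thesis by linarith
qed

lemma Qfun_gauss_kernel: "Qfun y = (1 / sqrt (2*pi)) * integral {y..} gauss_kernel"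
  unfolding Qfun_def gauss_kernel_def by simp

lemma Qfun_strict_antimono: "a < b \<Longrightarrow> Qfun b < Qfun a"
  unfolding Qfun_gauss_kernel using integral_gauss_kernel_split[of a b] integral_gauss_kernel_pos[of a b] by (simp add: divide_strict_right_mono)

lemma continuous_on_Qfun: "continuous_on {a..b} Qfun"
proof -
  have "continuous_on {a..b} (\<lambda>y. (1 / sqrt (2*pi)) * (integral {y..b} gauss_kernel + integral {b..} gauss_kernel))"
    by (intro continuous_intros indefinite_integral_continuous_1' integrable_continuous_interval continuous_on_gauss_kernel)
  moreover have "Qfun y = (1 / sqrt (2*pi)) * (integral {y..b} gauss_kernel + integral {b..} gauss_kernel)" if "y \<in> {a..b}" for y
    using that integral_gauss_kernel_split[of y b] by (simp add: Qfun_gauss_kernel)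
  ultimately show ?thesis using continuous_on_cong by (metis (no_types, lifting))
qed

lemma exp1_bounds: "(1359/500) \<le> exp (1::real)" "exp (1::real) \<le> (27183/10000)"
proof -
  have h: "exp 1 - 5837465777 / 2147483648 \<le> inverse (2^32::real) \<and> -(exp 1 - 5837465777 / 2147483648) \<le> inverse (2^32::real)"
    using e_approx_32 by (simp only: abs_le_iff)
  have "inverse (2^32::real) = 1/4294967296" by simp
  with h show "(1359/500) \<le> exp (1::real)" by linarith
  from h \<open>inverse (2^32::real) = 1/4294967296\<close> show "exp (1::real) \<le> (27183/10000)" by linarith
qed

text \<open>On [1,2] the concave exponent -z^2/2 lies above its chord 1 - 3z/2.\<close>

lemma integral_gauss_kernel_1_ge: "23/75 \<le> integral {1..} gauss_kernel"
proof -
  define h where "h z = exp (1 - 3*z/2)" for z :: real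
  have h_int: "(h has_integral ((-2/3) * exp (1 - 3*2/2) - (-2/3) * exp (1 - 3*1/2))) {1..2}"
    unfolding h_def
    by (intro fundamental_theorem_of_calculus)
       (auto intro!: derivative_eq_intros simp flip: has_real_derivative_iff_has_vector_derivative)
  have "integral {1..2} h \<le> integral {1..2} gauss_kernel"
  proof (rule integral_le)
    show "h integrable_on {1..2}" using h_int by blast
    show "gauss_kernel integrable_on {1..2}"
      using integrable_continuous_interval[OF continuous_on_gauss_kernel] .
    fix x :: real assume "x \<in> {1..2}"
    hence "(x - 1) * (x - 2) \<le> 0" by (intro mult_nonneg_nonpos) auto
    hence "1 - 3*x/2 \<le> - (x^2) / 2" by (simp add: algebra_simps power2_eq_square)
    thus "h x \<le> gauss_kernel x" unfolding h_def gauss_kernel_def by simp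
  qed
  also have "\<dots> \<le> integral {1..} gauss_kernel"
    using integral_gauss_kernel_split[of 1 2] gauss_kernel_integrable_on[of 2]
    by (simp add: integral_nonneg gauss_kernel_pos less_imp_le)
  finally have "(2/3) * (exp (-1/2) - exp (-2)) \<le> integral {1..} gauss_kernel"
    using integral_unique[OF h_int] by (simp add: algebra_simps)
  moreover have "exp (-1/2::real) \<ge> 3/5"
  proof -
    have "exp (1/2::real)^2 = exp 1" by (simp add: exp_double[symmetric])
    hence "exp (1/2::real)^2 \<le> (5/3)^2" using exp1_bounds(2) by (simp add: power2_eq_square)
    hence "exp (1/2::real) \<le> 5/3" by (rule power2_le_imp_le) simp
    thus ?thesis by (simp add: exp_minus field_simps)
  qed
  moreover have "exp (-2::real) \<le> 7/50"
  proof -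
    have "exp (2::real) = exp 1 ^ 2" by (simp add: exp_double[symmetric] power2_eq_square exp_add[symmetric])
    hence "exp (2::real) \<ge> (1359/500)^2" using exp1_bounds by (simp add: power_mono)
    hence "exp (2::real) \<ge> 50/7" by (simp add: power2_eq_square)
    thus ?thesis by (simp add: exp_minus field_simps)
  qed
  ultimately have "(2/3) * (23/50) \<le> (2/3) * (exp (-1/2::real) - exp (-2))"
    by (intro mult_left_mono) auto
  with \<open>(2/3) * (exp (-1/2) - exp (-2)) \<le> integral {1..} gauss_kernel\<close> show ?thesis by linarith
qed

lemma Qfun_1_gt: "Qfun 1 > 1/10"
proof -
  have "sqrt (2*pi) \<le> sqrt (3^2)" using pi_less_4 by (intro real_sqrt_le_mono) simp
  hence "1/3 \<le> 1 / sqrt (2*pi)" by (simp add: field_simps)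
  hence "(1/3) * (23/75) \<le> Qfun 1"
    unfolding Qfun_gauss_kernel using integral_gauss_kernel_1_ge by (intro mult_mono) auto
  thus ?thesis by simp
qed

text \<open>Mills' ratio bound, from the tangent-line estimate at y.\<close>

lemma integral_gauss_kernel_tail_le:
  assumes "y > 0"
  shows "integral {y..} gauss_kernel \<le> exp (- (y^2/2)) / y"
proof -
  have "integral {y..} gauss_kernel \<le> integral {y..} (\<lambda>z. exp (y^2/2) * exp (- y * z))"
  proof (rule integral_le)
    show "gauss_kernel integrable_on {y..}" by (rule gauss_kernel_integrable_on)
    show "(\<lambda>z. exp (y^2/2) * exp (- y * z)) integrable_on {y..}"
      using integrable_on_cmult_left[OF integrable_on_exp_minus_to_infinity[OF assms]] by simp
    show "gauss_kernel x \<le> exp (y^2/2) * exp (- y * x)" for x by (rule gauss_kernel_le_exp_linear)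
  qed
  also have "\<dots> = exp (y^2/2) * (exp (- y * y) / y)"
    using has_integral_exp_minus_to_infinity[OF assms, of y] by (simp add: integral_unique)
  also have "exp (- y * y) = exp (-(y^2/2)) * exp (-(y^2/2))"
    by (simp add: exp_add[symmetric] power2_eq_square)
  also have "exp (y^2/2) * (exp (-(y^2/2)) * exp (-(y^2/2)) / y) = exp (- (y^2/2)) / y"
    by (simp add: exp_minus)
  finally show ?thesis .
qed

lemma Qfun_9_2_lt: "Qfun (9/2) < 1/100000"
proof -
  have "exp (10::real) = exp 1 ^ 10" using exp_of_nat_mult[of 10 "1::real"] by simp
  hence "(1359/500) ^ 10 \<le> exp (10::real)" using exp1_bounds by (simp add: power_mono)
  also have "exp (10::real) \<le> exp ((9/2)^2/2)" by (simp add: power2_eq_square)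
  finally have tail: "exp (- ((9/2)^2/2)) \<le> 1 / (1359/500::real) ^ 10"
    by (simp add: exp_minus field_simps)
  have "2^2 \<le> 2*pi" using pi_gt3 by simp
  hence "1 / sqrt (2 * pi) \<le> 1/2" by (simp add: real_le_rsqrt field_simps)
  hence "Qfun (9/2) \<le> (1/2) * (exp (- ((9/2)^2/2)) / (9/2))"
    unfolding Qfun_gauss_kernel using integral_gauss_kernel_tail_le[of "9/2"]
    by (intro mult_mono) (auto intro: integral_nonneg simp: gauss_kernel_integrable_on gauss_kernel_pos less_imp_le)
  also have "\<dots> \<le> (1/2) * ((1 / (1359/500) ^ 10) / (9/2))" using tail by (simp add: divide_right_mono)
  also have "\<dots> < 1/100000" by (simp add: eval_nat_numeral)
  finally show ?thesis .
qed

lemma Qinv_bounds: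
  assumes "1/100000 \<le> d" "d \<le> 1/10"
  shows "1 \<le> Qinv d \<and> Qinv d \<le> 9/2"
proof -
  have "\<exists>x. 1 \<le> x \<and> x \<le> 9/2 \<and> Qfun x = d"
    by (rule IVT2') (use assms Qfun_1_gt Qfun_9_2_lt continuous_on_Qfun in auto)
  then obtain x where x: "1 \<le> x" "x \<le> 9/2" "Qfun x = d" by blast
  have uniq: "y = x" if "Qfun y = d" for y
    using Qfun_strict_antimono[of x y] Qfun_strict_antimono[of y x] that x(3) by (cases "x < y"; cases "y < x") auto
  have "Qinv d = x" unfolding Qinv_def using x(3) uniq by (rule the_equality)
  thus ?thesis using x by simp
qed

section \<open>The Gaussian-mechanism noise level\<close>

lemma upper_privacy_condition_imp:
  fixes eps eta :: real
  assumes "eta > 0" and "1/8 * ((1 + sqrt (36 * eta + 1)) / eta)^2 \<le> eps"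
  shows "1 + 9 * eta \<le> 2 * eps * eta^2"
proof -
  define r where "r = sqrt (36 * eta + 1)"
  have "r \<ge> 1" and r_sq: "r^2 = 36 * eta + 1" unfolding r_def using \<open>eta > 0\<close> by simp_all
  have "(1 + r)^2 \<le> 8 * eps * eta^2"
    using assms by (simp add: r_def power_divide divide_le_eq mult.commute mult.left_commute)
  moreover have "(1 + r)^2 = 2 + 2*r + 36*eta" using r_sq by (simp add: power2_eq_square algebra_simps)
  ultimately show ?thesis using \<open>r \<ge> 1\<close> by linarith
qed

lemma gaussian_noise_level_le:
  fixes K eps eta Delta :: real
  assumes "eps > 0" and "K \<le> 9/2" and "Delta > 0" and "eta > 0"
    and eta_eps: "1 + 9 * eta \<le> 2 * eps * eta^2"
  shows "Delta / (2 * eps) * (K + sqrt (K^2 + 2 * eps)) \<le> eta * Delta"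
proof -
  have "2 * eta * K \<le> 9 * eta" using assms(2,4) by simp
  hence slack: "1 \<le> 2 * eps * eta^2 - 2 * eta * K" using eta_eps by linarith
  have "9 * eta < 2 * eps * eta * eta" using eta_eps by (simp add: power2_eq_square)
  hence "9 < 2 * eps * eta" using \<open>eta > 0\<close> by simp
  hence "0 \<le> 2 * eps * eta - K" using assms(2) by linarith
  moreover have "K^2 + 2 * eps \<le> (2 * eps * eta - K)^2"
  proof -
    have "2 * eps * 1 \<le> 2 * eps * (2 * eps * eta^2 - 2 * eta * K)"
      using slack \<open>eps > 0\<close> by (intro mult_left_mono) auto
    thus ?thesis by (simp add: power2_eq_square algebra_simps)
  qed
  ultimately have "K + sqrt (K^2 + 2 * eps) \<le> 2 * eps * eta"
    using real_le_lsqrt by (smt (verit) real_sqrt_le_iff)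
  hence "Delta / (2 * eps) * (K + sqrt (K^2 + 2 * eps)) \<le> Delta / (2 * eps) * (2 * eps * eta)"
    using assms(1,3) by (intro mult_left_mono) auto
  thus ?thesis using \<open>eps > 0\<close> by (simp add: mult.commute)
qed

lemma gaussian_noise_level_ge:
  fixes K eps eta Delta :: real
  assumes "eps > 0" and "1 \<le> K" and "Delta > 0" and "eta \<ge> 0" and "eps \<le> 1 / eta"
  shows "eta * Delta \<le> Delta / (2 * eps) * (K + sqrt (K^2 + 2 * eps))"
proof -
  have "K \<le> sqrt (K^2 + 2 * eps)" using assms(1,2) by (simp add: real_le_rsqrt)
  hence "Delta / (2 * eps) * 2 \<le> Delta / (2 * eps) * (K + sqrt (K^2 + 2 * eps))"
    using assms(1-3) by (intro mult_left_mono) auto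
  moreover have "eta * Delta \<le> Delta / eps"
  proof (cases "eta = 0")
    case False
    hence "eta \<le> 1 / eps"
      using assms(1,4,5) by (simp add: le_divide_eq mult.commute)
    thus ?thesis using assms(3) \<open>eps > 0\<close> by (simp add: mult_right_mono divide_simps mult.commute)
  qed (use assms in simp)
  ultimately show ?thesis using \<open>eps > 0\<close> by simp
qed

lemma trace_budget_upper:
  fixes t s c n B Delta :: real
  assumes "t \<le> n * (s^2 / c)" and "0 < c" and "0 < n" and "0 < B" and "0 < Delta" and "0 \<le> s"
    and "s \<le> sqrt (B * c / (n * Delta^2)) * Delta"
  shows "t \<le> B"
proof -
  have "s^2 \<le> (sqrt (B * c / (n * Delta^2)) * Delta)^2" using assms(6,7) by (intro power_mono)
  also have "\<dots> = B * c / n" using assms(2-5) by (simp add: power_mult_distrib)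
  finally have "n * (s^2 / c) \<le> B" using assms(2,3) by (simp add: field_simps)
  with assms(1) show ?thesis by linarith
qed

lemma trace_budget_lower:
  fixes t s c n lam B Delta :: real
  assumes "n * (1 / (c / s^2 + 1 / lam)) \<le> t" and "0 < c" and "0 < lam" and "0 < s"
    and "0 < B" and "0 < Delta" and "0 < n - B / lam"
    and "sqrt (B * c / (Delta^2 * (n - B / lam))) * Delta \<le> s"
  shows "B \<le> t"
proof -
  have "B * c / (n - B / lam) = (sqrt (B * c / (Delta^2 * (n - B / lam))) * Delta)^2"
    using assms(2,5-7) by (simp add: power_mult_distrib)
  also have "\<dots> \<le> s^2" using assms(2,5-8) by (intro power_mono) simp_all
  finally have "B * (c / s^2 + 1 / lam) \<le> n" using assms(4,7) by (simp add: field_simps)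
  hence "B \<le> n * (1 / (c / s^2 + 1 / lam))"
    using assms(2-4) by (simp add: field_simps add_pos_pos)
  with assms(1) show ?thesis by linarith
qed

theorem theorem6:
  fixes H W Sigma C :: "real^'n^'n"
    and D :: "real^'m^'n"
    and Delta delta eps B_l B_u :: real
  assumes W_pd: "pd W"
    and C_diag: "diagonal_mat C"
    and C_nz: "\<forall>i. C $ i $ i \<noteq> 0"
    and obs: "observable H C"
    and ctrb: "controllable H D"
    and W_D: "W = D ** transpose D"
    and Delta_pos: "Delta > 0"
    and delta_lo: "10 powr (-5) \<le> delta" and delta_hi: "delta \<le> 10 powr (-1)"
    and eps_pos: "eps > 0"
  defines "K \<equiv> Qinv delta"
  defines "sig \<equiv> Delta / (2 * eps) * (K + sqrt (K^2 + 2 * eps))"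
  defines "V \<equiv> (sig^2) *\<^sub>R (mat 1 :: real^'n^'n)"
  assumes Sigma_psd: "psd Sigma"
    and Sigma_ric: "Sigma = H ** Sigma ** transpose H
        - H ** Sigma ** transpose C ** matrix_inv (C ** Sigma ** transpose C + V)
            ** C ** Sigma ** transpose H + W"
  defines "Sigmabar \<equiv> matrix_inv (transpose C ** matrix_inv V ** C + matrix_inv Sigma)"
  defines "n \<equiv> real CARD('n)"
  defines "Cl2 \<equiv> Min ((\<lambda>i. (C $ i $ i)^2) ` UNIV)"
  defines "Cu2 \<equiv> Max ((\<lambda>i. (C $ i $ i)^2) ` UNIV)"
  assumes Bl_pos: "0 < B_l" and Bl_lt: "B_l < n * lambda_min W"
    and Bu_pos: "0 < B_u"
  defines "eta2 \<equiv> sqrt (B_l * Cu2 / (Delta^2 * (n - B_l / lambda_min W)))"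
  defines "eta4 \<equiv> sqrt (B_u * Cl2 / (n * Delta^2))"
  shows "(1/8 * ((1 + sqrt (36 * eta4 + 1)) / eta4)^2 \<le> eps \<longrightarrow> trace Sigmabar \<le> B_u)
       \<and> (eps \<le> 1 / eta2 \<longrightarrow> B_l \<le> trace Sigmabar)"
proof -
  have "1 \<le> K" "K \<le> 9/2"
    using Qinv_bounds delta_lo delta_hi unfolding K_def by (simp_all add: powr_minus)
  have "0 < sig"
    unfolding sig_def using \<open>1 \<le> K\<close> eps_pos Delta_pos
    by (intro mult_pos_pos divide_pos_pos add_pos_nonneg) auto
  hence "0 < sig^2" by simp
  note trace_bounds = kalman_posterior_trace_bounds[OF W_pd C_diag C_nz this Sigma_psd
      Sigma_ric[unfolded V_def], folded V_def, folded Sigmabar_def n_def Cl2_def Cu2_def]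
  have "0 < Cl2" "0 < Cu2" "0 < n" "0 < lambda_min W"
    using C_nz pd_lambda_min(1)[OF W_pd] by (simp_all add: Cl2_def Cu2_def n_def Min_gr_iff Max_gr_iff)
  show ?thesis
  proof (intro conjI impI)
    assume "1/8 * ((1 + sqrt (36 * eta4 + 1)) / eta4)^2 \<le> eps"
    moreover have "0 < eta4" unfolding eta4_def using \<open>0 < Cl2\<close> \<open>0 < n\<close> Bu_pos Delta_pos by simp
    ultimately have "sig \<le> eta4 * Delta"
      unfolding sig_def using upper_privacy_condition_imp
      by (intro gaussian_noise_level_le[OF eps_pos \<open>K \<le> 9/2\<close> Delta_pos]) auto
    thus "trace Sigmabar \<le> B_u"
      unfolding eta4_def using \<open>0 < sig\<close>
      by (intro trace_budget_upper[OF trace_bounds(1) \<open>0 < Cl2\<close> \<open>0 < n\<close> Bu_pos Delta_pos]) simp_all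
  next
    assume "eps \<le> 1 / eta2"
    have "0 < n - B_l / lambda_min W" using Bl_lt \<open>0 < lambda_min W\<close> by (simp add: field_simps)
    hence "0 \<le> eta2" unfolding eta2_def using Bl_pos \<open>0 < Cu2\<close> by simp
    with \<open>eps \<le> 1 / eta2\<close> have "eta2 * Delta \<le> sig"
      unfolding sig_def using gaussian_noise_level_ge[OF eps_pos \<open>1 \<le> K\<close> Delta_pos] by blast
    thus "B_l \<le> trace Sigmabar"
      unfolding eta2_def
      by (rule trace_budget_lower[OF trace_bounds(2) \<open>0 < Cu2\<close> \<open>0 < lambda_min W\<close> \<open>0 < sig\<close>
            Bl_pos Delta_pos \<open>0 < n - B_l / lambda_min W\<close>])
  qed
qed

end
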